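(* Fix a step $h$ and write $\widehat{\Theta}_0:=\widehat{\Theta}_0^\top(h)=\frac1K\sum_{t=1}^T\Psi_{t}^\top Y_{t}e_t^\top\in\mathbb{R}^{d\times T}$ and $\sigma^\star_{\min}:=\sigma^\star_{\min}(h)$. There is an absolute constant $c>0$ such that for every $\delta_0>0$, with probability at least $1-\exp\!\big[(T+d)-c\,\epsilon_3^2\delta_0^2K\frac{\zeta^4}{d^2}\sigma^{\star2}_{\min}\big]$ with $\epsilon_3=0.1$, $$\big\|\widehat{\Theta}_0-\mathbb{E}[\widehat{\Theta}_0]\big\|\le 0.1\,\delta_0\frac{\zeta^2}{d}\sigma^\star_{\min},$$ where $\|\cdot\|$ is the spectral norm.
   Context: Setting: $T$ tasks, each a finite-horizon episodic MDP with common finite state space, finite action space, horizon $H$, common transitions, and deterministic rewards $R_{ht}(s,a)=\langle\theta^\star_{ht},\psi(s,a)\rangle\in[0,1]$, with $\psi:\mathcal S\times\mathcal A\to\mathbb{R}^d$, $\|\psi(s,a)\|\le1$, $\|\theta^\star_{ht}\|\le\sqrt d$. $\Theta^\star_h\in\mathbb{R}^{T\times d}$ has $t$-th row $\theta^{\star\top}_{ht}$, rank $r\le\frac12\min(T,d)$, and $\sigma^\star_{\min}(h)$ is its smallest nonzero singular value. For each task $t$ and $k=1,\dots,K$ one episode is run under a fixed exploration policy; at step $h$ one records $\psi_{tk}=\psi(s_h,a_h)$ and $y_{tk}=\langle\theta^\star_{ht},\psi_{tk}\rangle$. $Y_t=[y_{t1},\dots,y_{tK}]^\top$, $\Psi_t\in\mathbb{R}^{K\times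 d}$ has rows $\psi_{tk}^\top$, $e_t\in\mathbb{R}^T$ standard basis vector. The exploration policy is such that the $\psi_{tk}$ are i.i.d. with $\|\psi_{tk}\|\le1$ a.s. and there exist $\zeta,\xi>0$ with $\mathbb{E}|\langle\psi_{tk},x\rangle|\ge\zeta/\sqrt d$ and $\mathbb{E}[\psi_{tk}\psi_{tk}^\top]\preceq\frac{1}{d\xi^2}I$ for all unit $x\in\mathbb{R}^d$. *)

theory Defs
  imports "HOL-Probability.Probability" "Jordan_Normal_Form.Matrix" "Jordan_Normal_Form.Char_Poly"
    "Jordan_Normal_Form.DL_Rank"
begin

definition vnorm :: "real vec \<Rightarrow> real" where
  "vnorm v = sqrt (scalar_prod v v)"

definition spec_norm :: "real mat \<Rightarrow> real" where
  "spec_norm M = Sup {vnorm (M *\<^sub>v x) | x. x \<in> carrier_vec (dim_col M) \<and> vnorm x \<le> 1}"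

definition singular_value :: "real mat \<Rightarrow> real \<Rightarrow> bool" where
  "singular_value M s \<longleftrightarrow> s \<ge> 0 \<and> eigenvalue (transpose_mat M * M) (s\<^sup>2)"

definition sigma_min :: "real mat \<Rightarrow> real" where
  "sigma_min M = Min {s. singular_value M s \<and> s \<noteq> 0}"

definition mat_rank :: "nat \<Rightarrow> real mat \<Rightarrow> nat" where
  "mat_rank n A = vec_space.rank n (A :: real mat)"

definition loewner_le :: "nat \<Rightarrow> real mat \<Rightarrow> real mat \<Rightarrow> bool" where
  "loewner_le n A B \<longleftrightarrow> (\<forall>x\<in>carrier_vec n. scalar_prod x ((B - A) *\<^sub>v x) \<ge> 0)"

definition second_moment :: "nat \<Rightarrow> real vec pmf \<Rightarrow> real mat" where
  "second_moment d D = mat d d (\<lambda>(i,j). measure_pmf.expectation D (\<lambda>v. v $ i * v $ j))"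

definition sample_space :: "nat \<Rightarrow> nat \<Rightarrow> nat \<Rightarrow> real vec pmf \<Rightarrow> (nat \<times> nat \<Rightarrow> real vec) pmf" where
  "sample_space d T K D = Pi_pmf ({..<T} \<times> {..<K}) (0\<^sub>v d) (\<lambda>_. D)"

text \<open>The initial estimator (d x T): column t is (1/K) Psi_t^T Y_t, with
  y_tk = <theta*_t, psi_tk>, theta*_t the t-th row of Theta*.\<close>
definition Theta0_hat :: "nat \<Rightarrow> nat \<Rightarrow> nat \<Rightarrow> real mat \<Rightarrow> (nat \<times> nat \<Rightarrow> real vec) \<Rightarrow> real mat" where
  "Theta0_hat d T K Ths \<omega> = mat d T (\<lambda>(i,t).
     (1 / real K) * (\<Sum>k<K. (\<omega> (t,k) $ i) * scalar_prod (row Ths t) (\<omega> (t,k))))"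

definition Theta0_mean :: "nat \<Rightarrow> nat \<Rightarrow> nat \<Rightarrow> real vec pmf \<Rightarrow> real mat \<Rightarrow> real mat" where
  "Theta0_mean d T K D Ths = mat d T (\<lambda>(i,t).
     measure_pmf.expectation (sample_space d T K D) (\<lambda>\<omega>. Theta0_hat d T K Ths \<omega> $$ (i,t)))"

end

theory Submission
  imports Defs
begin

(* Each bilinear form u . (Theta0_hat - E Theta0_hat) v is a sum of T K independent terms, one per
   sample psi_tk, the term of psi_tk being bounded by |v_t| |u| / K, so Hoeffding's inequality bounds
   its tail by exp (- K s^2 / (2 |u|^2 |v|^2)). The spectral norm is at most 16/7 times the maximum
   of these forms over u, v in 1/4-nets of the unit balls of R^d and R^T; rounded grid points of
   l1-norm at most 5 n form such a net of R^n with at most 3^(6 n) <= e^(8 n) points, and a union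
   bound gives failure probability exp (8 (T + d) - K eps^2 / 30), below the claimed bound for
   c = 1/300. The threshold eps is positive because sigma_min is: the supremum of |Theta* z|^2 over
   unit vectors z is an eigenvalue of Theta*^T Theta*, and it is positive when Theta* is nonzero. *)

lemma scalar_prod_eq_sum: "y \<in> carrier_vec n \<Longrightarrow> x \<bullet> y = (\<Sum>i<n. x $ i * y $ i)"
  unfolding scalar_prod_def by (simp add: atLeast0LessThan)

lemma scalar_prod_self_nonneg: "0 \<le> (x :: real vec) \<bullet> x"
  unfolding scalar_prod_def by (auto intro!: sum_nonneg)

lemma vnorm_nonneg: "0 \<le> vnorm x"
  unfolding vnorm_def using scalar_prod_self_nonneg by simp

lemma vnorm_square: "(vnorm x)\<^sup>2 = x \<bullet> x"
  unfolding vnorm_def using scalar_prod_self_nonneg by simp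

lemma vnorm_square_eq_sum: "x \<in> carrier_vec n \<Longrightarrow> (vnorm x)\<^sup>2 = (\<Sum>i<n. (x $ i)\<^sup>2)"
  unfolding vnorm_square by (simp add: scalar_prod_eq_sum power2_eq_square)

lemma vnorm_zero_vec [simp]: "vnorm (0\<^sub>v n) = 0"
  by (simp add: vnorm_def)

lemma vnorm_eq_0_iff:
  assumes "x \<in> carrier_vec n"
  shows "vnorm x = 0 \<longleftrightarrow> x = 0\<^sub>v n"
proof
  assume "vnorm x = 0"
  hence "(\<Sum>i<n. (x $ i)\<^sup>2) = 0"
    using vnorm_square_eq_sum[OF assms] by simp
  thus "x = 0\<^sub>v n"
    using assms by (intro eq_vecI) (auto simp: sum_nonneg_eq_0_iff)
qed simp

lemma vnorm_unit_vec: "i < n \<Longrightarrow> vnorm (unit_vec n i :: real vec) = 1"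
  unfolding vnorm_def by (simp add: scalar_prod_left_unit)

lemma abs_scalar_prod_le_vnorm:
  assumes "x \<in> carrier_vec n" "y \<in> carrier_vec n"
  shows "\<bar>x \<bullet> y\<bar> \<le> vnorm x * vnorm y"
proof -
  have "(x \<bullet> y)\<^sup>2 \<le> (x \<bullet> x) * (y \<bullet> y)"
    using Cauchy_Schwarz_ineq_sum[of "\<lambda>i. x $ i" "\<lambda>i. y $ i" "{..<n}"]
    by (simp add: scalar_prod_eq_sum[OF assms(1)] scalar_prod_eq_sum[OF assms(2)] power2_eq_square)
  also have "\<dots> = (vnorm x * vnorm y)\<^sup>2"
    by (simp add: power_mult_distrib vnorm_square)
  finally show ?thesis
    using vnorm_nonneg by (metis abs_le_square_iff abs_of_nonneg mult_nonneg_nonneg)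
qed

lemma vnorm_smult: "vnorm (c \<cdot>\<^sub>v x) = \<bar>c\<bar> * vnorm (x :: real vec)"
proof -
  have "(c \<cdot>\<^sub>v x) \<bullet> (c \<cdot>\<^sub>v x) = c\<^sup>2 * (x \<bullet> x)"
    by (simp add: power2_eq_square)
  thus ?thesis unfolding vnorm_def by (simp add: real_sqrt_mult)
qed

lemma vnorm_add_le:
  assumes "x \<in> carrier_vec n" "y \<in> carrier_vec n"
  shows "vnorm (x + y) \<le> vnorm x + vnorm y"
proof -
  have "(vnorm (x + y))\<^sup>2 = x \<bullet> x + 2 * (x \<bullet> y) + y \<bullet> y"
    using assms by (simp add: vnorm_square add_scalar_prod_distrib scalar_prod_add_distrib
        comm_scalar_prod[of x n y])
  also have "\<dots> \<le> (vnorm x + vnorm y)\<^sup>2"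
    using abs_scalar_prod_le_vnorm[OF assms]
    by (simp add: vnorm_square[symmetric] power2_eq_square algebra_simps)
  finally show ?thesis
    using vnorm_nonneg by (meson power2_le_imp_le add_nonneg_nonneg)
qed

lemma vnorm_minus_commute:
  assumes "x \<in> carrier_vec n" "y \<in> carrier_vec n"
  shows "vnorm (x - y) = vnorm (y - x)"
proof -
  have "(vnorm (x - y))\<^sup>2 = (vnorm (y - x))\<^sup>2"
    using assms by (simp add: vnorm_square_eq_sum[of _ n] power2_commute)
  thus ?thesis
    using vnorm_nonneg by (metis power2_eq_iff_nonneg)
qed

lemma vnorm_le_add_vnorm_minus:
  assumes x: "x \<in> carrier_vec n" and y: "y \<in> carrier_vec n"
  shows "vnorm y \<le> vnorm x + vnorm (x - y)"
proof -
  have "x + (y - x) = y"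
    using x y by (intro eq_vecI) auto
  hence "vnorm y \<le> vnorm x + vnorm (y - x)"
    using vnorm_add_le[OF x minus_carrier_vec[OF y x]] by simp
  thus ?thesis
    using vnorm_minus_commute[OF x y] by simp
qed

lemma abs_vec_index_le_vnorm:
  assumes "x \<in> carrier_vec n" "i < n"
  shows "\<bar>x $ i\<bar> \<le> vnorm x"
  using abs_scalar_prod_le_vnorm[OF unit_vec_carrier assms(1), of i] assms
  by (simp add: scalar_prod_left_unit vnorm_unit_vec)

lemma sum_abs_le_sqrt_dim_vnorm:
  assumes "x \<in> carrier_vec n"
  shows "(\<Sum>i<n. \<bar>x $ i\<bar>) \<le> sqrt (real n) * vnorm x"
proof -
  have "(\<Sum>i<n. \<bar>x $ i\<bar>)\<^sup>2 \<le> (\<Sum>i<n. \<bar>x $ i\<bar>\<^sup>2) * real n"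
    using sum_squared_le_sum_of_squares[of "\<lambda>i. \<bar>x $ i\<bar>" "{..<n}"] by simp
  also have "\<dots> = (sqrt (real n) * vnorm x)\<^sup>2"
    by (simp add: vnorm_square_eq_sum[OF assms] power_mult_distrib)
  finally show ?thesis
    using vnorm_nonneg by (meson power2_le_imp_le real_sqrt_ge_zero of_nat_0_le_iff mult_nonneg_nonneg)
qed

lemma ex_scalar_prod_eq_vnorm:
  assumes "w \<in> carrier_vec n"
  obtains u where "u \<in> carrier_vec n" "vnorm u \<le> 1" "u \<bullet> w = vnorm w"
proof (cases "vnorm w = 0")
  case True
  thus ?thesis using that[of "0\<^sub>v n"] assms by simp
next
  case False
  hence "vnorm w > 0" using vnorm_nonneg[of w] by simp
  thus ?thesis
    using that[of "(1 / vnorm w) \<cdot>\<^sub>v w"] assms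
    by (simp add: vnorm_smult vnorm_square[symmetric] power2_eq_square)
qed

definition frobenius_norm :: "real mat \<Rightarrow> real" where
  "frobenius_norm A = sqrt (\<Sum>i<dim_row A. \<Sum>j<dim_col A. (A $$ (i,j))\<^sup>2)"

lemma frobenius_norm_nonneg: "0 \<le> frobenius_norm A"
  unfolding frobenius_norm_def by (auto intro!: sum_nonneg)

lemma vnorm_mult_mat_vec_le_frobenius:
  assumes A: "A \<in> carrier_mat m n" and x: "x \<in> carrier_vec n"
  shows "vnorm (A *\<^sub>v x) \<le> frobenius_norm A * vnorm x"
proof -
  have "(vnorm (A *\<^sub>v x))\<^sup>2 = (\<Sum>i<m. (row A i \<bullet> x)\<^sup>2)"
    using A x by (subst vnorm_square_eq_sum[of _ m]) auto
  also have "\<dots> \<le> (\<Sum>i<m. (vnorm (row A i))\<^sup>2 * (vnorm x)\<^sup>2)"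
    using abs_scalar_prod_le_vnorm[OF _ x] A
    by (intro sum_mono) (metis abs_le_square_iff abs_of_nonneg mult_nonneg_nonneg vnorm_nonneg
        power_mult_distrib row_carrier carrier_matD(2))
  also have "\<dots> = (frobenius_norm A * vnorm x)\<^sup>2"
    using A unfolding frobenius_norm_def
    by (simp add: power_mult_distrib vnorm_square_eq_sum[of _ n] sum_nonneg sum_distrib_right)
  finally show ?thesis
    using frobenius_norm_nonneg vnorm_nonneg by (meson power2_le_imp_le mult_nonneg_nonneg)
qed

lemma mult_mat_vec_zero [simp]: "M *\<^sub>v 0\<^sub>v n = (0\<^sub>v (dim_row M) :: real vec)"
  by (intro eq_vecI) (auto simp: scalar_prod_def)

lemma bdd_above_spec_norm_set:
  assumes M: "M \<in> carrier_mat m n"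
  shows "bdd_above {vnorm (M *\<^sub>v x) | x. x \<in> carrier_vec (dim_col M) \<and> vnorm x \<le> 1}"
proof (rule bdd_aboveI)
  fix y assume "y \<in> {vnorm (M *\<^sub>v x) | x. x \<in> carrier_vec (dim_col M) \<and> vnorm x \<le> 1}"
  then obtain x where x: "x \<in> carrier_vec n" "vnorm x \<le> 1" and y: "y = vnorm (M *\<^sub>v x)"
    using M by auto
  show "y \<le> frobenius_norm M"
    using vnorm_mult_mat_vec_le_frobenius[OF M x(1)] x(2) frobenius_norm_nonneg[of M] y
    by (metis mult_left_le order_trans vnorm_nonneg)
qed

lemma vnorm_mult_mat_vec_le_spec_norm:
  assumes M: "M \<in> carrier_mat m n" and x: "x \<in> carrier_vec n" "vnorm x \<le> 1"
  shows "vnorm (M *\<^sub>v x) \<le> spec_norm M"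
  unfolding spec_norm_def
  by (rule cSup_upper[OF _ bdd_above_spec_norm_set[OF M]]) (use M x in auto)

lemma spec_norm_nonneg: "M \<in> carrier_mat m n \<Longrightarrow> 0 \<le> spec_norm M"
  using vnorm_mult_mat_vec_le_spec_norm[of M m n "0\<^sub>v n"] by simp

lemma spec_norm_le:
  assumes M: "M \<in> carrier_mat m n"
    and B: "\<And>x. x \<in> carrier_vec n \<Longrightarrow> vnorm x \<le> 1 \<Longrightarrow> vnorm (M *\<^sub>v x) \<le> B"
  shows "spec_norm M \<le> B"
  unfolding spec_norm_def
proof (rule cSup_least)
  have "0\<^sub>v n \<in> carrier_vec (dim_col M) \<and> vnorm (0\<^sub>v n) \<le> 1"
    using M by simp
  thus "{vnorm (M *\<^sub>v x) |x. x \<in> carrier_vec (dim_col M) \<and> vnorm x \<le> 1} \<noteq> {}"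
    by blast
qed (use M B in auto)

lemma vnorm_mult_mat_vec_le:
  assumes M: "M \<in> carrier_mat m n" and x: "x \<in> carrier_vec n"
  shows "vnorm (M *\<^sub>v x) \<le> spec_norm M * vnorm x"
proof (cases "vnorm x = 0")
  case True
  thus ?thesis using M vnorm_eq_0_iff[OF x] by simp
next
  case False
  hence pos: "vnorm x > 0" using vnorm_nonneg[of x] by simp
  have "vnorm (M *\<^sub>v ((1 / vnorm x) \<cdot>\<^sub>v x)) \<le> spec_norm M"
    using M x pos by (intro vnorm_mult_mat_vec_le_spec_norm) (auto simp: vnorm_smult)
  moreover have "M *\<^sub>v ((1 / vnorm x) \<cdot>\<^sub>v x) = (1 / vnorm x) \<cdot>\<^sub>v (M *\<^sub>v x)"
    by (rule mult_mat_vec[OF M x])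
  ultimately show ?thesis
    using pos by (simp add: vnorm_smult divide_le_eq)
qed

lemma scalar_prod_mult_mat_vec_le:
  assumes M: "M \<in> carrier_mat m n" and u: "u \<in> carrier_vec m" and x: "x \<in> carrier_vec n"
  shows "u \<bullet> (M *\<^sub>v x) \<le> vnorm u * (spec_norm M * vnorm x)"
proof -
  have "u \<bullet> (M *\<^sub>v x) \<le> vnorm u * vnorm (M *\<^sub>v x)"
    using abs_scalar_prod_le_vnorm[OF u mult_mat_vec_carrier[OF M x]] by linarith
  also have "\<dots> \<le> vnorm u * (spec_norm M * vnorm x)"
    by (intro mult_left_mono vnorm_mult_mat_vec_le[OF M x] vnorm_nonneg)
  finally show ?thesis .
qed

lemma scalar_prod_mult_mat_vec_eq_0:
  fixes M :: "real mat"
  assumes M: "M \<in> carrier_mat m n" and u: "u \<in> carrier_vec m" and v: "v \<in> carrier_vec n"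
    and zero: "u = 0\<^sub>v m \<or> v = 0\<^sub>v n"
  shows "u \<bullet> (M *\<^sub>v v) = 0"
  using zero mult_mat_vec_carrier[OF M v] M u by auto

section \<open>Nets of the unit ball\<close>

definition quarter_net :: "nat \<Rightarrow> real vec set \<Rightarrow> bool" where
  "quarter_net n N \<longleftrightarrow> finite N \<and> N \<subseteq> carrier_vec n \<and> (\<forall>y\<in>N. vnorm y \<le> 5/4) \<and>
     (\<forall>x\<in>carrier_vec n. vnorm x \<le> 1 \<longrightarrow> (\<exists>y\<in>N. vnorm (x - y) \<le> 1/4))"

lemma spec_norm_le_net_bound:
  assumes M: "M \<in> carrier_mat m n" and Nm: "quarter_net m Nm" and Nn: "quarter_net n Nn"
    and bound: "\<And>u v. u \<in> Nm \<Longrightarrow> v \<in> Nn \<Longrightarrow> u \<bullet> (M *\<^sub>v v) \<le> s"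
  shows "spec_norm M \<le> 16/7 * s"
proof -
  define L where "L = spec_norm M"
  have "vnorm (M *\<^sub>v x) \<le> s + 9/16 * L" if x: "x \<in> carrier_vec n" "vnorm x \<le> 1" for x
  proof -
    obtain u where u: "u \<in> carrier_vec m" "vnorm u \<le> 1" "u \<bullet> (M *\<^sub>v x) = vnorm (M *\<^sub>v x)"
      by (rule ex_scalar_prod_eq_vnorm[OF mult_mat_vec_carrier[OF M x(1)]])
    obtain u' where u': "u' \<in> Nm" "vnorm (u - u') \<le> 1/4"
      using Nm u unfolding quarter_net_def by blast
    obtain x' where x': "x' \<in> Nn" "vnorm (x - x') \<le> 1/4"
      using Nn x unfolding quarter_net_def by blast
    have u'_vec: "u' \<in> carrier_vec m" "vnorm u' \<le> 5/4" and x'_vec: "x' \<in> carrier_vec n"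
      using Nm Nn u' x' unfolding quarter_net_def by auto
    have "vnorm (M *\<^sub>v x) = (u - u') \<bullet> (M *\<^sub>v x) + u' \<bullet> (M *\<^sub>v x') + u' \<bullet> (M *\<^sub>v (x - x'))"
      using M u u'_vec x x'_vec
      by (simp add: minus_scalar_prod_distrib mult_minus_distrib_mat_vec scalar_prod_minus_distrib)
    also have "\<dots> \<le> 1/4 * L + s + 5/4 * (L * (1/4))"
    proof -
      have L: "0 \<le> L" unfolding L_def by (rule spec_norm_nonneg[OF M])
      have "(u - u') \<bullet> (M *\<^sub>v x) \<le> vnorm (u - u') * (L * vnorm x)"
        using scalar_prod_mult_mat_vec_le[OF M _ x(1), of "u - u'"] u u'_vec unfolding L_def by simp
      also have "\<dots> \<le> 1/4 * (L * 1)"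
        using u'(2) x(2) L by (intro mult_mono) (auto simp: vnorm_nonneg)
      finally have near_u: "(u - u') \<bullet> (M *\<^sub>v x) \<le> 1/4 * L" by simp
      have "u' \<bullet> (M *\<^sub>v (x - x')) \<le> vnorm u' * (L * vnorm (x - x'))"
        using scalar_prod_mult_mat_vec_le[OF M u'_vec(1), of "x - x'"] x x'_vec unfolding L_def by simp
      also have "\<dots> \<le> 5/4 * (L * (1/4))"
        using u'_vec(2) x'(2) L by (intro mult_mono) (auto simp: vnorm_nonneg)
      finally show ?thesis using near_u bound[OF u'(1) x'(1)] by linarith
    qed
    finally show ?thesis by simp
  qed
  hence "L \<le> s + 9/16 * L"
    unfolding L_def by (rule spec_norm_le[OF M])
  thus ?thesis unfolding L_def by simp
qed

lemma ex_net_pair_ge_if_spec_norm_gt: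
  assumes M: "M \<in> carrier_mat m n" and Nm: "quarter_net m Nm" and Nn: "quarter_net n Nn"
    and gt: "\<not> spec_norm M \<le> \<epsilon>"
  shows "\<exists>u\<in>Nm. \<exists>v\<in>Nn. 7/16 * \<epsilon> \<le> u \<bullet> (M *\<^sub>v v)"
  using spec_norm_le_net_bound[OF M Nm Nn, of "7/16 * \<epsilon>"] gt by force

definition l1_ball_lists :: "nat \<Rightarrow> nat \<Rightarrow> int list set" where
  "l1_ball_lists n L = {zs. length zs = n \<and> sum_list (map abs zs) \<le> int L}"

lemma sum_list_abs_nonneg: "0 \<le> sum_list (map abs (zs :: int list))"
  by (induction zs) auto

lemma finite_l1_ball_lists: "finite (l1_ball_lists n L)"
proof -
  have "\<bar>z\<bar> \<le> sum_list (map abs zs)" if "z \<in> set zs" for z :: int and zs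
    using that by (induction zs) (auto simp: add_increasing2 add_increasing sum_list_abs_nonneg)
  hence "l1_ball_lists n L \<subseteq> {zs. set zs \<subseteq> {- int L..int L} \<and> length zs = n}"
    unfolding l1_ball_lists_def by fastforce
  thus ?thesis
    using finite_lists_length_eq[of "{- int L..int L}" n] finite_subset by blast
qed

lemma l1_ball_lists_Suc_0: "l1_ball_lists (Suc n) 0 \<subseteq> Cons 0 ` l1_ball_lists n 0"
proof
  fix zs assume "zs \<in> l1_ball_lists (Suc n) 0"
  then obtain a r where zs: "zs = a # r" "length r = n" "\<bar>a\<bar> + sum_list (map abs r) \<le> 0"
    unfolding l1_ball_lists_def by (cases zs) auto
  moreover have "sum_list (map abs r) \<ge> 0" by (rule sum_list_abs_nonneg)
  ultimately show "zs \<in> Cons 0 ` l1_ball_lists n 0"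
    unfolding l1_ball_lists_def by auto
qed

lemma l1_ball_lists_Suc_Suc:
  "l1_ball_lists (Suc n) (Suc L) \<subseteq> Cons 0 ` l1_ball_lists n (Suc L) \<union>
     (\<lambda>zs. (hd zs + 1) # tl zs) ` l1_ball_lists (Suc n) L \<union>
     (\<lambda>zs. (hd zs - 1) # tl zs) ` l1_ball_lists (Suc n) L"
proof
  fix zs assume "zs \<in> l1_ball_lists (Suc n) (Suc L)"
  then obtain a r where zs: "zs = a # r" "length r = n" "\<bar>a\<bar> + sum_list (map abs r) \<le> int L + 1"
    unfolding l1_ball_lists_def by (cases zs) auto
  consider "a = 0" | "a > 0" | "a < 0" by linarith
  thus "zs \<in> Cons 0 ` l1_ball_lists n (Suc L) \<union>
     (\<lambda>zs. (hd zs + 1) # tl zs) ` l1_ball_lists (Suc n) L \<union>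
     (\<lambda>zs. (hd zs - 1) # tl zs) ` l1_ball_lists (Suc n) L"
  proof cases
    case 1
    thus ?thesis using zs unfolding l1_ball_lists_def by auto
  next
    case 2
    have "(a - 1) # r \<in> l1_ball_lists (Suc n) L" and "zs = (\<lambda>zs. (hd zs + 1) # tl zs) ((a - 1) # r)"
      using zs 2 unfolding l1_ball_lists_def by auto
    thus ?thesis by blast
  next
    case 3
    have "(a + 1) # r \<in> l1_ball_lists (Suc n) L" and "zs = (\<lambda>zs. (hd zs - 1) # tl zs) ((a + 1) # r)"
      using zs 3 unfolding l1_ball_lists_def by auto
    thus ?thesis by blast
  qed
qed

lemma card_l1_ball_lists: "card (l1_ball_lists n L) \<le> 3 ^ (n + L)"
proof (induction n arbitrary: L)
  case 0
  have "l1_ball_lists 0 L = {[]}" unfolding l1_ball_lists_def by auto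
  thus ?case by simp
next
  case (Suc n)
  note IH_n = Suc.IH
  show ?case
  proof (induction L)
    case 0
    have "card (l1_ball_lists (Suc n) 0) \<le> card (Cons 0 ` l1_ball_lists n 0)"
      by (intro card_mono l1_ball_lists_Suc_0 finite_imageI finite_l1_ball_lists)
    also have "\<dots> \<le> card (l1_ball_lists n 0)"
      by (rule card_image_le[OF finite_l1_ball_lists])
    also have "\<dots> \<le> 3 ^ (Suc n + 0)"
      using IH_n[of 0] by simp
    finally show ?case .
  next
    case (Suc L)
    have "card (l1_ball_lists (Suc n) (Suc L)) \<le>
        card (l1_ball_lists n (Suc L)) + card (l1_ball_lists (Suc n) L) + card (l1_ball_lists (Suc n) L)"
      by (rule order_trans[OF card_mono[OF _ l1_ball_lists_Suc_Suc]])
        (auto simp: finite_l1_ball_lists intro!: order_trans[OF card_Un_le] add_mono card_image_le)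
    also have "\<dots> \<le> 3 ^ (n + Suc L) + 3 ^ (Suc n + L) + 3 ^ (Suc n + L)"
      using IH_n[of "Suc L"] Suc.IH by (intro add_mono) auto
    finally show ?case by simp
  qed
qed

(* Rounding a point of the unit ball down to the grid of mesh 1/(4 sqrt n) moves it by at most
   1/4 and gives integer coordinates of l1-norm at most 4 sqrt n * sqrt n + n = 5 n. *)
definition grid_net :: "nat \<Rightarrow> real vec set" where
  "grid_net n = {y \<in> (\<lambda>zs. vec n (\<lambda>i. of_int (zs ! i) / (4 * sqrt (real n)))) ` l1_ball_lists n (5 * n).
     vnorm y \<le> 5/4}"

lemma card_grid_net: "card (grid_net n) \<le> 3 ^ (6 * n)"
proof -
  have "card (grid_net n) \<le> card (l1_ball_lists n (5 * n))"
    unfolding grid_net_def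
    by (rule order_trans[OF card_mono card_image_le]) (auto intro: finite_l1_ball_lists)
  also have "\<dots> \<le> 3 ^ (6 * n)"
    using card_l1_ball_lists[of n "5 * n"] by simp
  finally show ?thesis .
qed

lemma card_grid_net_le_exp: "real (card (grid_net n)) \<le> exp (8 * real n)"
proof -
  have "real (card (grid_net n)) \<le> 3 ^ (6 * n)"
    using card_grid_net[of n] by (metis of_nat_le_iff of_nat_numeral of_nat_power)
  also have "\<dots> \<le> exp (4/3) ^ (6 * n)"
    using exp_lower_Taylor_quadratic[of "4/3"] by (intro power_mono) (auto simp: power2_eq_square)
  also have "\<dots> = exp (8 * real n)"
    by (simp add: exp_of_nat_mult[symmetric])
  finally show ?thesis .
qed

lemma abs_floor_divide_le:
  fixes a h :: real
  assumes "0 < h"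
  shows "\<bar>of_int \<lfloor>a / h\<rfloor>\<bar> \<le> \<bar>a\<bar> / h + 1"
  using abs_div_pos[OF assms, of a] floor_le_iff[of "a / h"] floor_correct[of "a / h"] by linarith

lemma vnorm_minus_floor_grid_le:
  assumes x: "x \<in> carrier_vec n" and h: "0 < h"
  shows "(vnorm (x - vec n (\<lambda>i. of_int \<lfloor>x $ i / h\<rfloor> * h)))\<^sup>2 \<le> real n * h\<^sup>2"
proof -
  have "of_int \<lfloor>x $ i / h\<rfloor> * h \<le> x $ i" "x $ i < (of_int \<lfloor>x $ i / h\<rfloor> + 1) * h" for i
    using of_int_floor_le[of "x $ i / h"] real_of_int_floor_add_one_gt[of "x $ i / h"]
    by (simp_all only: pos_le_divide_eq[OF h] pos_divide_less_eq[OF h])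
  hence "\<bar>x $ i - of_int \<lfloor>x $ i / h\<rfloor> * h\<bar> \<le> h" for i
    by (simp add: abs_le_iff distrib_right) (smt (verit))
  hence "(\<Sum>i<n. (x $ i - of_int \<lfloor>x $ i / h\<rfloor> * h)\<^sup>2) \<le> (\<Sum>i<n. h\<^sup>2)"
    by (intro sum_mono) (metis abs_le_square_iff abs_of_pos h)
  thus ?thesis
    using x by (subst vnorm_square_eq_sum[of _ n]) auto
qed

lemma quarter_net_grid_net:
  assumes n: "n \<ge> 1"
  shows "quarter_net n (grid_net n)"
  unfolding quarter_net_def
proof (intro conjI ballI impI)
  show "finite (grid_net n)"
    unfolding grid_net_def by (rule finite_subset[OF _ finite_imageI[OF finite_l1_ball_lists]]) auto
  show "grid_net n \<subseteq> carrier_vec n" "\<And>y. y \<in> grid_net n \<Longrightarrow> vnorm y \<le> 5/4"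
    unfolding grid_net_def by auto
next
  fix x :: "real vec" assume x: "x \<in> carrier_vec n" and x1: "vnorm x \<le> 1"
  define h where "h = 1 / (4 * sqrt (real n))"
  have h: "h > 0" and h_sq: "real n * h\<^sup>2 = (1/4)\<^sup>2" and sqrt_n: "sqrt (real n) / h = 4 * real n"
    using n by (auto simp: h_def power2_eq_square)
  define zs where "zs = map (\<lambda>i. \<lfloor>x $ i / h\<rfloor>) [0..<n]"
  define y where "y = vec n (\<lambda>i. of_int \<lfloor>x $ i / h\<rfloor> * h)"
  have y: "y \<in> carrier_vec n" unfolding y_def by simp
  have "(vnorm (x - y))\<^sup>2 \<le> (1/4)\<^sup>2"
    using vnorm_minus_floor_grid_le[OF x h] h_sq unfolding y_def by linarith
  hence dist: "vnorm (x - y) \<le> 1/4"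
    by (rule power2_le_imp_le) simp
  have y_norm: "vnorm y \<le> 5/4"
    using vnorm_le_add_vnorm_minus[OF x y] x1 dist by simp
  have "real_of_int (sum_list (map abs zs)) = (\<Sum>i<n. \<bar>of_int \<lfloor>x $ i / h\<rfloor>\<bar>)"
    unfolding zs_def by (simp add: sum_list_sum_nth atLeast0LessThan)
  also have "\<dots> \<le> (\<Sum>i<n. \<bar>x $ i\<bar> / h + 1)"
    by (intro sum_mono abs_floor_divide_le h)
  also have "\<dots> = (\<Sum>i<n. \<bar>x $ i\<bar>) / h + n"
    by (simp add: sum.distrib sum_divide_distrib)
  also have "\<dots> \<le> sqrt (real n) / h + n"
    using sum_abs_le_sqrt_dim_vnorm[OF x] mult_left_le[OF x1 real_sqrt_ge_zero[of n]] h
    by (intro add_right_mono divide_right_mono) auto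
  finally have "zs \<in> l1_ball_lists n (5 * n)"
    using sqrt_n unfolding l1_ball_lists_def zs_def by simp
  moreover have "y = vec n (\<lambda>i. of_int (zs ! i) / (4 * sqrt (real n)))"
    unfolding y_def zs_def h_def by (intro eq_vecI) auto
  ultimately have "y \<in> grid_net n"
    using y_norm unfolding grid_net_def by blast
  thus "\<exists>y\<in>grid_net n. vnorm (x - y) \<le> 1/4"
    using dist by blast
qed

section \<open>Positivity of the smallest nonzero singular value\<close>

lemma smult_mat_mult_mat_vec:
  "A \<in> carrier_mat n m \<Longrightarrow> v \<in> carrier_vec m \<Longrightarrow> (k \<cdot>\<^sub>m A) *\<^sub>v v = k \<cdot>\<^sub>v (A *\<^sub>v (v :: real vec))"
  by (intro eq_vecI) (auto simp: mult_mat_vec_def scalar_prod_def sum_distrib_left ac_simps)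

lemma square_le_mult_if_quadratic_nonneg:
  fixes a b c :: real
  assumes nonneg: "\<And>t. 0 \<le> a + 2 * b * t + c * t\<^sup>2" and c: "0 \<le> c"
  shows "b\<^sup>2 \<le> a * c"
proof (cases "c = 0")
  case True
  have "b = 0"
  proof (rule ccontr)
    assume "b \<noteq> 0"
    hence "2 * b * (- (\<bar>a\<bar> + 1) / (2 * b)) = - (\<bar>a\<bar> + 1)" by simp
    thus False using nonneg[of "- (\<bar>a\<bar> + 1) / (2 * b)"] True by simp
  qed
  thus ?thesis using True by simp
next
  case False
  hence "c > 0" using c by simp
  thus ?thesis
    using nonneg[of "- b / c"] by (simp add: power2_eq_square field_simps)
qed

lemma psd_form_Cauchy_Schwarz:
  fixes P :: "real mat"
  assumes P: "P \<in> carrier_mat n n" "transpose_mat P = P"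
    and psd: "\<And>z. z \<in> carrier_vec n \<Longrightarrow> 0 \<le> z \<bullet> (P *\<^sub>v z)"
    and x: "x \<in> carrier_vec n" and y: "y \<in> carrier_vec n"
  shows "(y \<bullet> (P *\<^sub>v x))\<^sup>2 \<le> (y \<bullet> (P *\<^sub>v y)) * (x \<bullet> (P *\<^sub>v x))"
proof -
  have swap: "x \<bullet> (P *\<^sub>v y) = y \<bullet> (P *\<^sub>v x)"
    using transpose_vec_mult_scalar[OF P(1) y x] comm_scalar_prod[OF mult_mat_vec_carrier[OF P(1) x] y]
    by (simp add: P(2))
  have "0 \<le> y \<bullet> (P *\<^sub>v y) + 2 * (y \<bullet> (P *\<^sub>v x)) * t + (x \<bullet> (P *\<^sub>v x)) * t\<^sup>2" for t
  proof -
    have "P *\<^sub>v (y + t \<cdot>\<^sub>v x) = P *\<^sub>v y + t \<cdot>\<^sub>v (P *\<^sub>v x)"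
      using P x y by (simp add: mult_add_distrib_mat_vec mult_mat_vec)
    hence "(y + t \<cdot>\<^sub>v x) \<bullet> (P *\<^sub>v (y + t \<cdot>\<^sub>v x)) =
        y \<bullet> (P *\<^sub>v y) + 2 * (y \<bullet> (P *\<^sub>v x)) * t + (x \<bullet> (P *\<^sub>v x)) * t\<^sup>2"
      using P x y swap
      by (simp add: add_scalar_prod_distrib[of _ n] scalar_prod_add_distrib[of _ n] power2_eq_square
          algebra_simps)
    thus ?thesis
      using psd[of "y + t \<cdot>\<^sub>v x"] x y by simp
  qed
  thus ?thesis
    using square_le_mult_if_quadratic_nonneg psd[OF x] by blast
qed

(* |Px|^4 = (Px . Px)^2 <= (Px . PPx) (x . Px) by Cauchy-Schwarz for the form of P, and |x| <= |C| |Px|. *)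
lemma vnorm_square_le_psd_form:
  assumes P: "P \<in> carrier_mat n n" "transpose_mat P = P"
    and psd: "\<And>z. z \<in> carrier_vec n \<Longrightarrow> 0 \<le> z \<bullet> (P *\<^sub>v z)"
    and C: "C \<in> carrier_mat n n" "C * P = 1\<^sub>m n" and x: "x \<in> carrier_vec n"
  shows "(vnorm x)\<^sup>2 \<le> (frobenius_norm C)\<^sup>2 * frobenius_norm P * (x \<bullet> (P *\<^sub>v x))"
proof -
  define y where "y = P *\<^sub>v x"
  have y: "y \<in> carrier_vec n" unfolding y_def using P x by simp
  have "((vnorm y)\<^sup>2)\<^sup>2 \<le> (y \<bullet> (P *\<^sub>v y)) * (x \<bullet> (P *\<^sub>v x))"
    using psd_form_Cauchy_Schwarz[OF P psd x y] unfolding y_def by (simp add: vnorm_square)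
  also have "\<dots> \<le> (frobenius_norm P * (vnorm y)\<^sup>2) * (x \<bullet> (P *\<^sub>v x))"
  proof (intro mult_right_mono psd[OF x])
    have "y \<bullet> (P *\<^sub>v y) \<le> vnorm y * vnorm (P *\<^sub>v y)"
      using abs_scalar_prod_le_vnorm[OF y mult_mat_vec_carrier[OF P(1) y]] by linarith
    also have "\<dots> \<le> vnorm y * (frobenius_norm P * vnorm y)"
      by (intro mult_left_mono vnorm_mult_mat_vec_le_frobenius[OF P(1) y] vnorm_nonneg)
    finally show "y \<bullet> (P *\<^sub>v y) \<le> frobenius_norm P * (vnorm y)\<^sup>2"
      by (simp add: power2_eq_square ac_simps)
  qed
  finally have quartic:
    "(vnorm y)\<^sup>2 * (vnorm y)\<^sup>2 \<le> (frobenius_norm P * (x \<bullet> (P *\<^sub>v x))) * (vnorm y)\<^sup>2"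
    by (simp only: power2_eq_square[of "(vnorm y)\<^sup>2"] ac_simps)
  have y_bound: "(vnorm y)\<^sup>2 \<le> frobenius_norm P * (x \<bullet> (P *\<^sub>v x))"
  proof (cases "vnorm y = 0")
    case True
    thus ?thesis using psd[OF x] frobenius_norm_nonneg[of P] by simp
  next
    case False
    thus ?thesis using mult_right_le_imp_le[OF quartic] by simp
  qed
  have "x = C *\<^sub>v y"
    using C P x unfolding y_def by (simp add: assoc_mult_mat_vec[symmetric])
  hence "vnorm x \<le> frobenius_norm C * vnorm y"
    using vnorm_mult_mat_vec_le_frobenius[OF C(1) y] by simp
  hence "(vnorm x)\<^sup>2 \<le> (frobenius_norm C)\<^sup>2 * (vnorm y)\<^sup>2"
    by (metis power_mono vnorm_nonneg power_mult_distrib)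
  also have "\<dots> \<le> (frobenius_norm C)\<^sup>2 * frobenius_norm P * (x \<bullet> (P *\<^sub>v x))"
    using y_bound by (simp add: mult.assoc mult_left_mono)
  finally show ?thesis .
qed

lemma det_eq_0_if_psd_form_not_coercive:
  assumes P: "P \<in> carrier_mat n n" "transpose_mat P = P"
    and psd: "\<And>z. z \<in> carrier_vec n \<Longrightarrow> 0 \<le> z \<bullet> (P *\<^sub>v z)"
    and small: "\<And>\<epsilon>. \<epsilon> > 0 \<Longrightarrow> \<exists>x\<in>carrier_vec n. x \<bullet> (P *\<^sub>v x) < \<epsilon> * (vnorm x)\<^sup>2"
  shows "det P = 0"
proof (rule ccontr)
  assume "det P \<noteq> 0"
  then obtain C where C: "C \<in> carrier_mat n n" "C * P = 1\<^sub>m n"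
    using det_non_zero_imp_unit[OF P(1)] unfolding Units_def ring_mat_def by auto
  define G where "G = (frobenius_norm C)\<^sup>2 * frobenius_norm P"
  have G: "0 \<le> G" unfolding G_def by (simp add: frobenius_norm_nonneg)
  obtain x where x: "x \<in> carrier_vec n" and x_small: "x \<bullet> (P *\<^sub>v x) < 1 / (G + 1) * (vnorm x)\<^sup>2"
    using small[of "1 / (G + 1)"] G by auto
  have pos: "0 < (vnorm x)\<^sup>2"
  proof (rule ccontr)
    assume "\<not> 0 < (vnorm x)\<^sup>2"
    hence "(vnorm x)\<^sup>2 = 0" by (simp add: less_le)
    thus False using x_small psd[OF x] by simp
  qed
  have "(vnorm x)\<^sup>2 \<le> G * (1 / (G + 1) * (vnorm x)\<^sup>2)"
    using vnorm_square_le_psd_form[OF P psd C x] mult_left_mono[OF less_imp_le[OF x_small] G]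
    unfolding G_def by linarith
  also have "\<dots> = G / (G + 1) * (vnorm x)\<^sup>2"
    by simp
  also have "\<dots> < (vnorm x)\<^sup>2"
    using pos G by (simp add: field_simps add_pos_nonneg)
  finally show False by simp
qed

lemma gram_quadratic_form:
  assumes M: "M \<in> carrier_mat m n" and z: "z \<in> carrier_vec n"
  shows "z \<bullet> ((transpose_mat M * M) *\<^sub>v z) = (vnorm (M *\<^sub>v z))\<^sup>2"
proof -
  have "z \<bullet> ((transpose_mat M * M) *\<^sub>v z) = (transpose_mat M *\<^sub>v (M *\<^sub>v z)) \<bullet> z"
    using M z by (simp add: assoc_mult_mat_vec comm_scalar_prod[of _ n])
  also have "\<dots> = (M *\<^sub>v z) \<bullet> (M *\<^sub>v z)"
    using M z by (intro transpose_vec_mult_scalar) auto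
  finally show ?thesis by (simp add: vnorm_square)
qed

definition gram_max :: "real mat \<Rightarrow> real" where
  "gram_max M = Sup {(vnorm (M *\<^sub>v z))\<^sup>2 | z. z \<in> carrier_vec (dim_col M) \<and> vnorm z = 1}"

lemma bdd_above_gram_set:
  assumes M: "M \<in> carrier_mat m n"
  shows "bdd_above {(vnorm (M *\<^sub>v z))\<^sup>2 | z. z \<in> carrier_vec (dim_col M) \<and> vnorm z = 1}"
proof (rule bdd_aboveI)
  fix q assume "q \<in> {(vnorm (M *\<^sub>v z))\<^sup>2 | z. z \<in> carrier_vec (dim_col M) \<and> vnorm z = 1}"
  then obtain z where z: "z \<in> carrier_vec n" "vnorm z = 1" and q: "q = (vnorm (M *\<^sub>v z))\<^sup>2"
    using M by auto
  show "q \<le> (frobenius_norm M)\<^sup>2"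
    using vnorm_mult_mat_vec_le_frobenius[OF M z(1)] z(2) q by (simp add: power_mono vnorm_nonneg)
qed

lemma vnorm_mult_mat_vec_square_le_gram_max:
  assumes M: "M \<in> carrier_mat m n" and z: "z \<in> carrier_vec n"
  shows "(vnorm (M *\<^sub>v z))\<^sup>2 \<le> gram_max M * (vnorm z)\<^sup>2"
proof (cases "vnorm z = 0")
  case True
  thus ?thesis using M vnorm_eq_0_iff[OF z] by auto
next
  case False
  hence pos: "0 < vnorm z" using vnorm_nonneg[of z] by simp
  have "(vnorm (M *\<^sub>v ((1 / vnorm z) \<cdot>\<^sub>v z)))\<^sup>2 \<le> gram_max M"
    unfolding gram_max_def using M z pos
    by (intro cSup_upper[OF _ bdd_above_gram_set[OF M]]) (auto simp: vnorm_smult)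
  thus ?thesis
    using pos by (simp add: mult_mat_vec[OF M z] vnorm_smult power_divide divide_le_eq)
qed

lemma gram_max_pos:
  assumes M: "M \<in> carrier_mat m n" and nonzero: "M \<noteq> 0\<^sub>m m n"
  shows "0 < gram_max M"
proof -
  obtain i j where ij: "i < m" "j < n" "M $$ (i, j) \<noteq> 0"
    using nonzero M by (metis eq_matI carrier_matD index_zero_mat)
  have "(M *\<^sub>v unit_vec n j) $ i = M $$ (i, j)"
    using M ij by (simp add: comm_scalar_prod[of _ n] scalar_prod_left_unit)
  hence "M *\<^sub>v unit_vec n j \<noteq> 0\<^sub>v m"
    using ij by auto
  hence "0 < (vnorm (M *\<^sub>v unit_vec n j))\<^sup>2"
    using vnorm_eq_0_iff[of "M *\<^sub>v unit_vec n j" m] M by simp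
  also have "\<dots> \<le> gram_max M * (vnorm (unit_vec n j :: real vec))\<^sup>2"
    by (intro vnorm_mult_mat_vec_square_le_gram_max[OF M] unit_vec_carrier)
  finally show ?thesis
    using ij(2) by (simp add: vnorm_unit_vec)
qed

(* gram_max M * 1 - M^T M is positive semidefinite and its form gets arbitrarily small on unit
   vectors, so it is singular. *)
lemma eigenvalue_gram_max:
  fixes M :: "real mat"
  assumes M: "M \<in> carrier_mat m n" and nonzero: "M \<noteq> 0\<^sub>m m n"
  shows "eigenvalue (transpose_mat M * M) (gram_max M)"
proof -
  define A where "A = transpose_mat M * M"
  define P where "P = gram_max M \<cdot>\<^sub>m 1\<^sub>m n - A"
  have A: "A \<in> carrier_mat n n" and "transpose_mat A = A"
    unfolding A_def using M by (auto simp: transpose_mult[of _ n m _ n])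
  hence "A $$ (j, i) = A $$ (i, j)" if "i < n" "j < n" for i j
    using that by (metis carrier_matD index_transpose_mat(1))
  hence P: "P \<in> carrier_mat n n" "transpose_mat P = P"
    unfolding P_def using A by (auto intro!: eq_matI)
  have P_form: "z \<bullet> (P *\<^sub>v z) = gram_max M * (vnorm z)\<^sup>2 - (vnorm (M *\<^sub>v z))\<^sup>2"
    if z: "z \<in> carrier_vec n" for z
  proof -
    have "P *\<^sub>v z = gram_max M \<cdot>\<^sub>v z - A *\<^sub>v z"
      unfolding P_def using A z
      by (simp add: minus_mult_distrib_mat_vec[of _ n n] smult_mat_mult_mat_vec[of _ n n])
    hence "z \<bullet> (P *\<^sub>v z) = gram_max M * (z \<bullet> z) - z \<bullet> (A *\<^sub>v z)"
      using A z by (simp add: scalar_prod_minus_distrib[of _ n])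
    thus ?thesis
      unfolding A_def gram_quadratic_form[OF M z] by (simp add: vnorm_square)
  qed
  have "det P = 0"
  proof (rule det_eq_0_if_psd_form_not_coercive[OF P])
    show "0 \<le> z \<bullet> (P *\<^sub>v z)" if "z \<in> carrier_vec n" for z
      using P_form[OF that] vnorm_mult_mat_vec_square_le_gram_max[OF M that] by simp
  next
    fix \<epsilon> :: real assume "\<epsilon> > 0"
    define Q where "Q = {(vnorm (M *\<^sub>v z))\<^sup>2 | z. z \<in> carrier_vec (dim_col M) \<and> vnorm z = 1}"
    have "n \<noteq> 0"
      using nonzero M by (auto intro!: eq_matI)
    hence "(vnorm (M *\<^sub>v unit_vec n 0))\<^sup>2 \<in> Q"
      unfolding Q_def using M vnorm_unit_vec[of 0 n] by auto
    moreover have "gram_max M - \<epsilon> < Sup Q"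
      using \<open>\<epsilon> > 0\<close> unfolding gram_max_def Q_def by simp
    ultimately obtain q where "q \<in> Q" "gram_max M - \<epsilon> < q"
      using less_cSupD[of Q] by blast
    then obtain z where "z \<in> carrier_vec n" "vnorm z = 1" "gram_max M - \<epsilon> < (vnorm (M *\<^sub>v z))\<^sup>2"
      unfolding Q_def using M by auto
    thus "\<exists>z\<in>carrier_vec n. z \<bullet> (P *\<^sub>v z) < \<epsilon> * (vnorm z)\<^sup>2"
      using P_form by force
  qed
  moreover have "char_matrix A (gram_max M) = (- 1) \<cdot>\<^sub>m P"
    unfolding char_matrix_def P_def using A by (intro eq_matI) auto
  ultimately show ?thesis
    using eigenvalue_det[OF A] P unfolding A_def by simp
qed

lemma finite_singular_values:
  assumes M: "M \<in> carrier_mat m n"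
  shows "finite {s. singular_value M s}"
proof -
  define A where "A = transpose_mat M * M"
  have A: "A \<in> carrier_mat n n" unfolding A_def using M by simp
  have "char_poly A \<noteq> 0"
    using degree_monic_char_poly[OF A] by auto
  hence "finite (sqrt ` {e. poly (char_poly A) e = 0})"
    by (intro finite_imageI poly_roots_finite)
  moreover have "{s. singular_value M s} \<subseteq> sqrt ` {e. poly (char_poly A) e = 0}"
  proof
    fix s assume "s \<in> {s. singular_value M s}"
    hence "0 \<le> s" "poly (char_poly A) (s\<^sup>2) = 0"
      unfolding singular_value_def A_def[symmetric] using eigenvalue_root_char_poly[OF A] by auto
    thus "s \<in> sqrt ` {e. poly (char_poly A) e = 0}"
      by (metis (mono_tags) image_eqI mem_Collect_eq real_sqrt_abs abs_of_nonneg)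
  qed
  ultimately show ?thesis
    by (rule finite_subset[rotated])
qed

lemma nonzero_if_mat_rank_pos:
  assumes "0 < mat_rank n A"
  shows "A \<noteq> 0\<^sub>m n m"
proof
  assume "A = 0\<^sub>m n m"
  hence "mat_rank n A = 0"
    unfolding mat_rank_def using vec_space.rank_0I by metis
  thus False using assms by simp
qed

lemma sigma_min_pos:
  assumes M: "M \<in> carrier_mat m n" and nonzero: "M \<noteq> 0\<^sub>m m n"
  shows "0 < sigma_min M"
proof -
  define S where "S = {s. singular_value M s \<and> s \<noteq> 0}"
  have "sqrt (gram_max M) \<in> S"
    using gram_max_pos[OF M nonzero] eigenvalue_gram_max[OF M nonzero]
    unfolding S_def singular_value_def by simp
  moreover have "finite S"
    unfolding S_def using finite_singular_values[OF M] by (rule rev_finite_subset) auto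
  ultimately have "sigma_min M \<in> S"
    unfolding sigma_min_def S_def[symmetric] by (intro Min_in) auto
  thus ?thesis
    unfolding S_def singular_value_def by auto
qed

section \<open>Concentration of the initial estimator\<close>

lemma scalar_prod_mult_mat_vec_eq_sum:
  assumes H: "H \<in> carrier_mat m n" and u: "u \<in> carrier_vec m" and v: "v \<in> carrier_vec n"
  shows "u \<bullet> (H *\<^sub>v v) = (\<Sum>i<m. \<Sum>j<n. u $ i * H $$ (i, j) * v $ j)"
  using H u v by (simp add: scalar_prod_eq_sum[of _ m] scalar_prod_eq_sum[of _ n] sum_distrib_left ac_simps)

lemma scalar_prod_expectation_mat:
  fixes \<Omega> :: "'a pmf" and H :: "'a \<Rightarrow> real mat"
  assumes H: "\<And>\<omega>. H \<omega> \<in> carrier_mat m n"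
    and integrable: "\<And>i j. i < m \<Longrightarrow> j < n \<Longrightarrow> integrable \<Omega> (\<lambda>\<omega>. H \<omega> $$ (i, j))"
    and u: "u \<in> carrier_vec m" and v: "v \<in> carrier_vec n"
  shows "u \<bullet> (mat m n (\<lambda>(i, j). measure_pmf.expectation \<Omega> (\<lambda>\<omega>. H \<omega> $$ (i, j))) *\<^sub>v v) =
    measure_pmf.expectation \<Omega> (\<lambda>\<omega>. u \<bullet> (H \<omega> *\<^sub>v v))"
proof -
  have int: "integrable \<Omega> (\<lambda>\<omega>. u $ i * H \<omega> $$ (i, j) * v $ j)" if "i < m" "j < n" for i j
    using integrable[OF that] by simp
  have "measure_pmf.expectation \<Omega> (\<lambda>\<omega>. \<Sum>i<m. \<Sum>j<n. u $ i * H \<omega> $$ (i, j) * v $ j) =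
      (\<Sum>i<m. measure_pmf.expectation \<Omega> (\<lambda>\<omega>. \<Sum>j<n. u $ i * H \<omega> $$ (i, j) * v $ j))"
    by (rule Bochner_Integration.integral_sum) (use int in \<open>auto intro!: integrable_sum\<close>)
  also have "\<dots> = (\<Sum>i<m. \<Sum>j<n. measure_pmf.expectation \<Omega> (\<lambda>\<omega>. u $ i * H \<omega> $$ (i, j) * v $ j))"
    by (intro sum.cong refl Bochner_Integration.integral_sum) (use int in auto)
  finally show ?thesis
    by (simp add: scalar_prod_mult_mat_vec_eq_sum[OF _ u v] scalar_prod_mult_mat_vec_eq_sum[OF H u v])
qed

lemma sample_space_support:
  "\<omega> \<in> set_pmf (sample_space d T K D) \<Longrightarrow> t < T \<Longrightarrow> k < K \<Longrightarrow> \<omega> (t, k) \<in> set_pmf D"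
  unfolding sample_space_def by (auto simp: set_Pi_pmf PiE_dflt_def)

lemma Theta0_hat_carrier [simp]: "Theta0_hat d T K Ths \<omega> \<in> carrier_mat d T"
  unfolding Theta0_hat_def by simp

lemma Theta0_mean_carrier [simp]: "Theta0_mean d T K D Ths \<in> carrier_mat d T"
  unfolding Theta0_mean_def by simp

definition sample_term :: "real mat \<Rightarrow> nat \<Rightarrow> real vec \<Rightarrow> real vec \<Rightarrow> nat \<times> nat \<Rightarrow> real vec \<Rightarrow> real" where
  "sample_term Ths K u v p w = v $ fst p / real K * ((u \<bullet> w) * (row Ths (fst p) \<bullet> w))"

lemma scalar_prod_Theta0_hat:
  assumes u: "u \<in> carrier_vec d" and v: "v \<in> carrier_vec T"
    and \<omega>: "\<And>t k. t < T \<Longrightarrow> k < K \<Longrightarrow> \<omega> (t, k) \<in> carrier_vec d"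
  shows "u \<bullet> (Theta0_hat d T K Ths \<omega> *\<^sub>v v) = (\<Sum>p\<in>{..<T} \<times> {..<K}. sample_term Ths K u v p (\<omega> p))"
proof -
  have "u \<bullet> (Theta0_hat d T K Ths \<omega> *\<^sub>v v) =
      (\<Sum>i<d. \<Sum>t<T. \<Sum>k<K. v $ t / real K * (u $ i * \<omega> (t, k) $ i * (row Ths t \<bullet> \<omega> (t, k))))"
    unfolding scalar_prod_mult_mat_vec_eq_sum[OF Theta0_hat_carrier u v]
    by (simp add: Theta0_hat_def sum_distrib_left sum_distrib_right ac_simps)
  also have "\<dots> =
      (\<Sum>t<T. \<Sum>k<K. \<Sum>i<d. v $ t / real K * (u $ i * \<omega> (t, k) $ i * (row Ths t \<bullet> \<omega> (t, k))))"
    by (subst sum.swap) (simp add: sum.swap[of _ "{..<K}" "{..<d}"])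
  also have "\<dots> = (\<Sum>t<T. \<Sum>k<K. sample_term Ths K u v (t, k) (\<omega> (t, k)))"
  proof (intro sum.cong refl)
    fix t k assume "t \<in> {..<T}" "k \<in> {..<K}"
    hence "u \<bullet> \<omega> (t, k) = (\<Sum>i<d. u $ i * \<omega> (t, k) $ i)"
      using \<omega> scalar_prod_eq_sum by blast
    thus "(\<Sum>i<d. v $ t / real K * (u $ i * \<omega> (t, k) $ i * (row Ths t \<bullet> \<omega> (t, k)))) =
        sample_term Ths K u v (t, k) (\<omega> (t, k))"
      unfolding sample_term_def by (simp add: sum_distrib_left sum_distrib_right ac_simps)
  qed
  finally show ?thesis
    by (simp add: sum.cartesian_product)
qed

lemma indep_vars_sample_space:
  "prob_space.indep_vars (sample_space d T K D) (\<lambda>_. borel) (\<lambda>p \<omega>. f p (\<omega> p)) ({..<T} \<times> {..<K})"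
proof -
  have "prob_space.indep_vars (measure_pmf (Pi_pmf ({..<T} \<times> {..<K}) (0\<^sub>v d) (\<lambda>_. D))) (\<lambda>_. borel)
      (\<lambda>p \<omega>. f p ((\<lambda>p \<omega>. \<omega> p) p \<omega>)) ({..<T} \<times> {..<K})"
    by (rule prob_space.indep_vars_compose2[OF measure_pmf.prob_space_axioms indep_vars_Pi_pmf]) auto
  thus ?thesis
    unfolding sample_space_def by simp
qed

lemma sum_square_sample_ranges:
  assumes v: "v \<in> carrier_vec T" and K: "K \<ge> 1"
  shows "(\<Sum>p\<in>{..<T} \<times> {..<K}. (2 * (\<bar>v $ fst p\<bar> * c / real K))\<^sup>2) = 4 * (c * vnorm v)\<^sup>2 / real K"
proof -
  have "(\<Sum>p\<in>{..<T} \<times> {..<K}. (2 * (\<bar>v $ fst p\<bar> * c / real K))\<^sup>2) =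
      (\<Sum>t<T. \<Sum>k<K. 4 * c\<^sup>2 * (v $ t)\<^sup>2 / (real K)\<^sup>2)"
    unfolding sum.cartesian_product' by (simp add: power2_eq_square field_simps)
  also have "\<dots> = (\<Sum>t<T. 4 * c\<^sup>2 * (v $ t)\<^sup>2 / real K)"
    using K by (simp add: power2_eq_square)
  also have "\<dots> = 4 * (c * vnorm v)\<^sup>2 / real K"
    by (simp add: vnorm_square_eq_sum[OF v] power_mult_distrib sum_distrib_left sum_divide_distrib
        mult.assoc)
  finally show ?thesis .
qed

lemma prob_ge_1_minus_exp_if_tail_le:
  fixes \<Omega> :: "'a pmf"
  assumes tail: "measure_pmf.prob \<Omega> {\<omega>. \<not> P \<omega>} \<le> exp (8 * n - X / 30)" and n: "0 \<le> n"
  shows "1 - exp (n - X / 300) \<le> measure_pmf.prob \<Omega> {\<omega>. P \<omega>}"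
proof (cases "0 \<le> n - X / 300")
  case True
  thus ?thesis
    using measure_nonneg[of \<Omega> "{\<omega>. P \<omega>}"] by (smt (verit) one_le_exp_iff)
next
  case False
  hence "exp (8 * n - X / 30) \<le> exp (n - X / 300)"
    using n by simp
  moreover have "measure_pmf.prob \<Omega> {\<omega>. \<not> P \<omega>} = 1 - measure_pmf.prob \<Omega> {\<omega>. P \<omega>}"
    using measure_pmf.prob_compl[of "{\<omega>. P \<omega>}" \<Omega>] by (simp add: Compl_eq_Diff_UNIV[symmetric] Collect_neg_eq)
  ultimately show ?thesis
    using tail by linarith
qed

context
  fixes d T K :: nat and D :: "real vec pmf" and Ths :: "real mat"
  assumes K: "K \<ge> 1"
    and responses: "\<forall>t<T. \<forall>w\<in>set_pmf D. 0 \<le> row Ths t \<bullet> w \<and> row Ths t \<bullet> w \<le> 1"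
    and features: "\<forall>w\<in>set_pmf D. w \<in> carrier_vec d \<and> vnorm w \<le> 1"
begin

lemma abs_Theta0_hat_le_1:
  assumes \<omega>: "\<omega> \<in> set_pmf (sample_space d T K D)" and i: "i < d" and t: "t < T"
  shows "\<bar>Theta0_hat d T K Ths \<omega> $$ (i, t)\<bar> \<le> 1"
proof -
  have "\<bar>\<Sum>k<K. \<omega> (t, k) $ i * (row Ths t \<bullet> \<omega> (t, k))\<bar> \<le> (\<Sum>k<K. 1)"
  proof (rule order_trans[OF sum_abs sum_mono])
    fix k assume "k \<in> {..<K}"
    hence w: "\<omega> (t, k) \<in> set_pmf D"
      using sample_space_support[OF \<omega> t] by simp
    hence "\<bar>\<omega> (t, k) $ i\<bar> \<le> 1"
      using abs_vec_index_le_vnorm[of _ d, OF _ i] features by (meson order_trans)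
    moreover have "\<bar>row Ths t \<bullet> \<omega> (t, k)\<bar> \<le> 1"
      using responses t w by auto
    ultimately show "\<bar>\<omega> (t, k) $ i * (row Ths t \<bullet> \<omega> (t, k))\<bar> \<le> 1"
      by (simp add: abs_mult mult_le_one)
  qed
  thus ?thesis
    using i t K by (simp add: Theta0_hat_def abs_mult divide_le_eq)
qed

lemma abs_sample_term_le:
  assumes u: "u \<in> carrier_vec d" and w: "w \<in> set_pmf D" and t: "fst p < T"
  shows "\<bar>sample_term Ths K u v p w\<bar> \<le> \<bar>v $ fst p\<bar> * vnorm u / real K"
proof -
  have "\<bar>u \<bullet> w\<bar> \<le> vnorm u * vnorm w"
    using features w by (intro abs_scalar_prod_le_vnorm[OF u]) auto
  also have "\<dots> \<le> vnorm u"
    using features w by (intro mult_left_le vnorm_nonneg) auto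
  finally have "\<bar>u \<bullet> w\<bar> \<le> vnorm u" .
  moreover have "\<bar>row Ths (fst p) \<bullet> w\<bar> \<le> 1"
    using responses w t by auto
  ultimately have "\<bar>(u \<bullet> w) * (row Ths (fst p) \<bullet> w)\<bar> \<le> vnorm u * 1"
    unfolding abs_mult by (intro mult_mono vnorm_nonneg abs_ge_zero)
  thus ?thesis
    unfolding sample_term_def by (simp add: abs_mult mult_left_mono divide_right_mono)
qed

lemma scalar_prod_Theta0_deviation:
  assumes u: "u \<in> carrier_vec d" and v: "v \<in> carrier_vec T"
    and \<omega>: "\<omega> \<in> set_pmf (sample_space d T K D)"
  shows "u \<bullet> ((Theta0_hat d T K Ths \<omega> - Theta0_mean d T K D Ths) *\<^sub>v v) =
    (\<Sum>p\<in>{..<T} \<times> {..<K}. sample_term Ths K u v p (\<omega> p)) -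
    (\<Sum>p\<in>{..<T} \<times> {..<K}. measure_pmf.expectation (sample_space d T K D) (\<lambda>\<omega>. sample_term Ths K u v p (\<omega> p)))"
proof -
  let ?\<Omega> = "sample_space d T K D"
  have hat_eq: "u \<bullet> (Theta0_hat d T K Ths \<omega>' *\<^sub>v v) = (\<Sum>p\<in>{..<T} \<times> {..<K}. sample_term Ths K u v p (\<omega>' p))"
    if "\<omega>' \<in> set_pmf ?\<Omega>" for \<omega>'
    using features sample_space_support[OF that] by (intro scalar_prod_Theta0_hat[OF u v]) auto
  have "u \<bullet> (Theta0_mean d T K D Ths *\<^sub>v v) =
      measure_pmf.expectation ?\<Omega> (\<lambda>\<omega>. u \<bullet> (Theta0_hat d T K Ths \<omega> *\<^sub>v v))"
    unfolding Theta0_mean_def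
  proof (rule scalar_prod_expectation_mat[OF Theta0_hat_carrier _ u v])
    fix i t assume "i < d" "t < T"
    thus "integrable ?\<Omega> (\<lambda>\<omega>. Theta0_hat d T K Ths \<omega> $$ (i, t))"
      using abs_Theta0_hat_le_1
      by (intro measure_pmf.integrable_const_bound[where B = 1]) (auto simp: AE_measure_pmf_iff)
  qed
  also have "\<dots> = measure_pmf.expectation ?\<Omega> (\<lambda>\<omega>. \<Sum>p\<in>{..<T} \<times> {..<K}. sample_term Ths K u v p (\<omega> p))"
    by (rule integral_cong_AE) (use hat_eq in \<open>auto simp: AE_measure_pmf_iff\<close>)
  also have "\<dots> = (\<Sum>p\<in>{..<T} \<times> {..<K}. measure_pmf.expectation ?\<Omega> (\<lambda>\<omega>. sample_term Ths K u v p (\<omega> p)))"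
  proof (rule Bochner_Integration.integral_sum)
    fix p :: "nat \<times> nat" assume "p \<in> {..<T} \<times> {..<K}"
    thus "integrable ?\<Omega> (\<lambda>\<omega>. sample_term Ths K u v p (\<omega> p))"
      using abs_sample_term_le[OF u] sample_space_support
      by (intro measure_pmf.integrable_const_bound[where B = "\<bar>v $ fst p\<bar> * vnorm u / real K"])
        (auto simp: AE_measure_pmf_iff)
  qed
  finally show ?thesis
    using mult_mat_vec_carrier[OF Theta0_hat_carrier v] mult_mat_vec_carrier[OF Theta0_mean_carrier v]
    by (simp add: minus_mult_distrib_mat_vec[OF Theta0_hat_carrier Theta0_mean_carrier v]
        scalar_prod_minus_distrib[OF u] hat_eq[OF \<omega>])
qed

lemma bilinear_deviation_tail:
  assumes u: "u \<in> carrier_vec d" and v: "v \<in> carrier_vec T"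
    and r: "vnorm u * vnorm v \<le> r" and s: "0 < s"
  shows "measure_pmf.prob (sample_space d T K D)
      {\<omega>. s \<le> u \<bullet> ((Theta0_hat d T K Ths \<omega> - Theta0_mean d T K D Ths) *\<^sub>v v)}
    \<le> exp (- (real K * s\<^sup>2 / (2 * r\<^sup>2)))"
proof (cases "vnorm u * vnorm v = 0")
  case True
  hence "u = 0\<^sub>v d \<or> v = 0\<^sub>v T"
    using vnorm_eq_0_iff[OF u] vnorm_eq_0_iff[OF v] by auto
  hence "{\<omega>. s \<le> u \<bullet> ((Theta0_hat d T K Ths \<omega> - Theta0_mean d T K D Ths) *\<^sub>v v)} = {}"
    using s scalar_prod_mult_mat_vec_eq_0[OF minus_carrier_mat[OF Theta0_mean_carrier] u v] by auto
  thus ?thesis by simp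
next
  case False
  let ?\<Omega> = "sample_space d T K D"
  define I where "I = {..<T} \<times> {..<K}"
  define X where "X p \<omega> = sample_term Ths K u v p (\<omega> p)" for p \<omega>
  define c where "c p = \<bar>v $ fst p\<bar> * vnorm u / real K" for p :: "nat \<times> nat"
  define \<mu> where "\<mu> = (\<Sum>p\<in>I. measure_pmf.expectation ?\<Omega> (X p))"
  have pos: "0 < vnorm u * vnorm v"
    using False vnorm_nonneg[of u] vnorm_nonneg[of v] by (simp add: less_le)
  have ranges: "(\<Sum>p\<in>I. (c p - - c p)\<^sup>2) = 4 * (vnorm u * vnorm v)\<^sup>2 / real K"
    using sum_square_sample_ranges[OF v K, of "vnorm u"] unfolding I_def
    by (simp only: c_def diff_minus_eq_add mult_2[symmetric])
  interpret Hoeffding_ineq ?\<Omega> I X "\<lambda>p. - c p" c \<mu>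
  proof unfold_locales
    show "finite I" unfolding I_def by simp
    show "prob_space.indep_vars ?\<Omega> (\<lambda>_. borel) X I"
      unfolding X_def I_def by (rule indep_vars_sample_space)
    show "AE \<omega> in ?\<Omega>. X p \<omega> \<in> {- c p..c p}" if "p \<in> I" for p
    proof -
      obtain t k where p: "p = (t, k)" "t < T" "k < K"
        using \<open>p \<in> I\<close> unfolding I_def by auto
      have "\<bar>X p \<omega>\<bar> \<le> c p" if "\<omega> \<in> set_pmf ?\<Omega>" for \<omega>
        unfolding X_def c_def p(1) using p by (intro abs_sample_term_le[OF u sample_space_support[OF that]]) auto
      thus ?thesis
        by (simp add: AE_measure_pmf_iff abs_le_iff minus_le_iff)
    qed
  qed (simp add: \<mu>_def)
  have "measure_pmf.prob ?\<Omega> {\<omega>. s \<le> u \<bullet> ((Theta0_hat d T K Ths \<omega> - Theta0_mean d T K D Ths) *\<^sub>v v)}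
      \<le> measure_pmf.prob ?\<Omega> {\<omega> \<in> space ?\<Omega>. \<mu> + s \<le> (\<Sum>p\<in>I. X p \<omega>)}"
    unfolding measure_Int_set_pmf[symmetric, of _ "{\<omega>. s \<le> _ \<omega>}"] \<mu>_def I_def X_def
    using scalar_prod_Theta0_deviation[OF u v] by (intro measure_pmf.finite_measure_mono) auto
  also have "\<dots> \<le> exp (- 2 * s\<^sup>2 / (\<Sum>p\<in>I. (c p - - c p)\<^sup>2))"
    using pos K s by (intro Hoeffding_ineq_ge) (simp_all only: ranges, auto intro!: divide_pos_pos)
  also have "\<dots> = exp (- (real K * s\<^sup>2 / (2 * (vnorm u * vnorm v)\<^sup>2)))"
    using pos K unfolding ranges by (simp add: field_simps)
  also have "\<dots> \<le> exp (- (real K * s\<^sup>2 / (2 * r\<^sup>2)))"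
  proof -
    have "(vnorm u * vnorm v)\<^sup>2 \<le> r\<^sup>2" and "0 < r"
      using pos r by (auto intro: power_mono)
    hence "real K * s\<^sup>2 / (2 * r\<^sup>2) \<le> real K * s\<^sup>2 / (2 * (vnorm u * vnorm v)\<^sup>2)"
      by (intro divide_left_mono mult_pos_pos) (use pos in auto)
    thus ?thesis by simp
  qed
  finally show ?thesis .
qed

lemma spec_norm_deviation_tail:
  assumes d: "d \<ge> 1" and T: "T \<ge> 1" and \<epsilon>: "0 < \<epsilon>"
  shows "measure_pmf.prob (sample_space d T K D)
      {\<omega>. \<not> spec_norm (Theta0_hat d T K Ths \<omega> - Theta0_mean d T K D Ths) \<le> \<epsilon>}
    \<le> exp (8 * real (T + d) - real K * \<epsilon>\<^sup>2 / 30)"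
proof -
  let ?\<Omega> = "sample_space d T K D"
  let ?M = "\<lambda>\<omega>. Theta0_hat d T K Ths \<omega> - Theta0_mean d T K D Ths"
  define s where "s = 7/16 * \<epsilon>"
  define N where "N = grid_net d \<times> grid_net T"
  define A where "A p = {\<omega>. s \<le> fst p \<bullet> (?M \<omega> *\<^sub>v snd p)}" for p
  have net_d: "quarter_net d (grid_net d)" and net_T: "quarter_net T (grid_net T)"
    using d T by (auto intro: quarter_net_grid_net)
  have "finite N"
    unfolding N_def using net_d net_T unfolding quarter_net_def by auto
  have "{\<omega>. \<not> spec_norm (?M \<omega>) \<le> \<epsilon>} \<subseteq> (\<Union>p\<in>N. A p)"
    using ex_net_pair_ge_if_spec_norm_gt[OF minus_carrier_mat[OF Theta0_mean_carrier] net_d net_T]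
    unfolding A_def N_def s_def by fastforce
  hence "measure_pmf.prob ?\<Omega> {\<omega>. \<not> spec_norm (?M \<omega>) \<le> \<epsilon>} \<le> (\<Sum>p\<in>N. measure_pmf.prob ?\<Omega> (A p))"
    by (intro order_trans[OF measure_pmf.finite_measure_mono measure_pmf.finite_measure_subadditive_finite])
      (auto simp: \<open>finite N\<close>)
  also have "\<dots> \<le> (\<Sum>p\<in>N. exp (- (real K * s\<^sup>2 / (2 * (25/16)\<^sup>2))))"
  proof (rule sum_mono)
    fix p assume "p \<in> N"
    then obtain u v where p: "p = (u, v)" "u \<in> grid_net d" "v \<in> grid_net T"
      unfolding N_def by auto
    have u: "u \<in> carrier_vec d" "vnorm u \<le> 5/4" and v: "v \<in> carrier_vec T" "vnorm v \<le> 5/4"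
      using p net_d net_T unfolding quarter_net_def by auto
    have "vnorm u * vnorm v \<le> 5/4 * (5/4)"
      using u(2) v(2) by (intro mult_mono vnorm_nonneg) auto
    thus "measure_pmf.prob ?\<Omega> (A p) \<le> exp (- (real K * s\<^sup>2 / (2 * (25/16)\<^sup>2)))"
      unfolding A_def p(1) fst_conv snd_conv using \<epsilon>
      by (intro bilinear_deviation_tail[OF u(1) v(1)]) (auto simp: s_def)
  qed
  also have "\<dots> = real (card N) * exp (- (real K * s\<^sup>2 / (2 * (25/16)\<^sup>2)))"
    by simp
  also have "\<dots> \<le> exp (8 * real (T + d)) * exp (- (real K * \<epsilon>\<^sup>2 / 30))"
  proof (intro mult_mono)
    have "real (card N) \<le> exp (8 * real d) * exp (8 * real T)"
      unfolding N_def card_cartesian_product of_nat_mult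
      by (intro mult_mono card_grid_net_le_exp) auto
    thus "real (card N) \<le> exp (8 * real (T + d))"
      by (simp add: exp_add[symmetric] algebra_simps)
    show "exp (- (real K * s\<^sup>2 / (2 * (25/16)\<^sup>2))) \<le> exp (- (real K * \<epsilon>\<^sup>2 / 30))"
      using \<epsilon> unfolding s_def by (simp add: power2_eq_square field_simps)
  qed auto
  finally show ?thesis
    by (simp add: exp_add[symmetric])
qed

lemma prob_spec_norm_deviation_le:
  assumes "d \<ge> 1" and "T \<ge> 1" and "0 < \<epsilon>"
  shows "1 - exp (real (T + d) - real K * \<epsilon>\<^sup>2 / 300) \<le> measure_pmf.prob (sample_space d T K D)
      {\<omega>. spec_norm (Theta0_hat d T K Ths \<omega> - Theta0_mean d T K D Ths) \<le> \<epsilon>}"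
  using prob_ge_1_minus_exp_if_tail_le[OF spec_norm_deviation_tail[OF assms]] by simp

end

theorem lemma1:
  "\<exists>c::real. c > 0 \<and>
    (\<forall>(d::nat) (T::nat) (K::nat) (r::nat) (D::real vec pmf) (Ths::real mat)
        (\<zeta>::real) (\<xi>::real) (\<delta>\<^sub>0::real).
      K \<ge> 1 \<longrightarrow>
      Ths \<in> carrier_mat T d \<longrightarrow>
      mat_rank T Ths = r \<longrightarrow> 0 < r \<longrightarrow> 2 * r \<le> min T d \<longrightarrow>
      (\<forall>t<T. vnorm (row Ths t) \<le> sqrt (real d)) \<longrightarrow>
      (\<forall>t<T. \<forall>v\<in>set_pmf D. 0 \<le> scalar_prod (row Ths t) v \<and> scalar_prod (row Ths t) v \<le> 1) \<longrightarrow>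
      (\<forall>v\<in>set_pmf D. v \<in> carrier_vec d \<and> vnorm v \<le> 1) \<longrightarrow>
      \<zeta> > 0 \<longrightarrow> \<xi> > 0 \<longrightarrow>
      (\<forall>x\<in>carrier_vec d. vnorm x = 1 \<longrightarrow>
         measure_pmf.expectation D (\<lambda>v. \<bar>scalar_prod v x\<bar>) \<ge> \<zeta> / sqrt (real d)) \<longrightarrow>
      loewner_le d (second_moment d D) ((1 / (real d * \<xi>\<^sup>2)) \<cdot>\<^sub>m 1\<^sub>m d) \<longrightarrow>
      \<delta>\<^sub>0 > 0 \<longrightarrow>
      (let \<epsilon>\<^sub>3 = (0.1::real); \<sigma> = sigma_min Ths in
       measure_pmf.prob (sample_space d T K D)
         {\<omega>. spec_norm (Theta0_hat d T K Ths \<omega> - Theta0_mean d T K D Ths)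
               \<le> 0.1 * \<delta>\<^sub>0 * (\<zeta>\<^sup>2 / real d) * \<sigma>}
       \<ge> 1 - exp (real (T + d) - c * \<epsilon>\<^sub>3\<^sup>2 * \<delta>\<^sub>0\<^sup>2 * real K * (\<zeta>^4 / (real d)\<^sup>2) * \<sigma>\<^sup>2)))"
proof (rule exI[of _ "1/300"], intro conjI allI impI)
  fix d T K r :: nat and D :: "real vec pmf" and Ths :: "real mat" and \<zeta> \<xi> \<delta>\<^sub>0 :: real
  assume K: "K \<ge> 1" and Ths: "Ths \<in> carrier_mat T d" and rank: "mat_rank T Ths = r" "0 < r"
    and dims: "2 * r \<le> min T d"
    and responses: "\<forall>t<T. \<forall>v\<in>set_pmf D. 0 \<le> row Ths t \<bullet> v \<and> row Ths t \<bullet> v \<le> 1"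
    and features: "\<forall>v\<in>set_pmf D. v \<in> carrier_vec d \<and> vnorm v \<le> 1"
    and \<zeta>: "\<zeta> > 0" and \<delta>\<^sub>0: "\<delta>\<^sub>0 > 0"
  have \<sigma>: "0 < sigma_min Ths"
    using rank by (intro sigma_min_pos[OF Ths] nonzero_if_mat_rank_pos) simp
  define \<epsilon> where "\<epsilon> = 0.1 * \<delta>\<^sub>0 * (\<zeta>\<^sup>2 / real d) * sigma_min Ths"
  have d: "d \<ge> 1" and T: "T \<ge> 1"
    using rank dims by auto
  hence "0 < \<epsilon>"
    unfolding \<epsilon>_def using \<delta>\<^sub>0 \<zeta> \<sigma> by simp
  note bound = prob_spec_norm_deviation_le[OF K responses features d T this]
  have exponent: "1/300 * (0.1::real)\<^sup>2 * \<delta>\<^sub>0\<^sup>2 * real K * (\<zeta>^4 / (real d)\<^sup>2) * (sigma_min Ths)\<^sup>2 =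
      real K * \<epsilon>\<^sup>2 / 300"
    unfolding \<epsilon>_def by (simp add: power2_eq_square power4_eq_xxxx field_simps)
  show "let \<epsilon>\<^sub>3 = (0.1::real); \<sigma> = sigma_min Ths in
      measure_pmf.prob (sample_space d T K D)
        {\<omega>. spec_norm (Theta0_hat d T K Ths \<omega> - Theta0_mean d T K D Ths) \<le> 0.1 * \<delta>\<^sub>0 * (\<zeta>\<^sup>2 / real d) * \<sigma>}
      \<ge> 1 - exp (real (T + d) - 1/300 * \<epsilon>\<^sub>3\<^sup>2 * \<delta>\<^sub>0\<^sup>2 * real K * (\<zeta>^4 / (real d)\<^sup>2) * \<sigma>\<^sup>2)"
    unfolding Let_def \<epsilon>_def[symmetric] exponent using bound by simp
qed simp

end
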